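(* Let $\{\mathcal{C}_1,\mathcal{C}_2,\mathcal{C}_3\}$ be an unextendible set of three pairwise disjoint maximal commuting classes of two-qubit Pauli operators ($d=4$). Then the nine operators in $\mathcal{C}_1\cup\mathcal{C}_2\cup\mathcal{C}_3$ can be partitioned into a different set of three maximal commuting classes $\{\mathcal{C}_1',\mathcal{C}_2',\mathcal{C}_3'\}$ such that each $\mathcal{C}_i'$ contains exactly one operator from each of $\mathcal{C}_1$, $\mathcal{C}_2$, and $\mathcal{C}_3$.
   Context: Two-qubit Pauli operators are the tensor products $P_1\otimes P_2$ with $P_k\in\{I,X,Y,Z\}$; products are taken up to a phase. A maximal commuting class in $d=4$ is a set of $3$ mutually commuting non-identity two-qubit Pauli operators. A set of pairwise disjoint maximal commuting classes $\{\mathcal{C}_1,\dots,\mathcal{C}_L\}$ is unextendible if no further maximal commuting class can be formed from the non-identity Pauli operators not in $\mathcal{C}_1\cup\dots\cup\mathcal{C}_L$. *)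

theory Defs
  imports Main
begin

text \<open>Single-qubit Pauli operators (up to phase).\<close>
datatype pauli = PI | PX | PY | PZ

text \<open>Two-qubit Pauli operators P1 (x) P2, up to phase.\<close>
type_synonym pauli2 = "pauli \<times> pauli"

definition identity2 :: pauli2 where
  "identity2 = (PI, PI)"

definition anticommute1 :: "pauli \<Rightarrow> pauli \<Rightarrow> bool" where
  "anticommute1 p q \<longleftrightarrow> p \<noteq> PI \<and> q \<noteq> PI \<and> p \<noteq> q"

text \<open>Tensor products commute iff the number of anticommuting tensor factors is even.\<close>
definition commute2 :: "pauli2 \<Rightarrow> pauli2 \<Rightarrow> bool" where
  "commute2 P Q \<longleftrightarrow> (anticommute1 (fst P) (fst Q) = anticommute1 (snd P) (snd Q))"

definition max_comm_class :: "pauli2 set \<Rightarrow> bool" where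
  "max_comm_class C \<longleftrightarrow> card C = 3 \<and> identity2 \<notin> C \<and>
     (\<forall>P\<in>C. \<forall>Q\<in>C. commute2 P Q)"

definition unextendible :: "pauli2 set set \<Rightarrow> bool" where
  "unextendible S \<longleftrightarrow>
     (\<forall>C\<in>S. max_comm_class C) \<and>
     (\<forall>C\<in>S. \<forall>D\<in>S. C \<noteq> D \<longrightarrow> C \<inter> D = {}) \<and>
     \<not> (\<exists>C. max_comm_class C \<and> C \<subseteq> UNIV - {identity2} - \<Union>S)"

end

theory Submission
  imports Defs "HOL-Library.Product_Plus"
begin

text \<open>
  Modulo phases the two-qubit Pauli operators form the group \<open>\<bbbF>\<^sub>2\<^sup>4\<close>, on which
  commutation is a symplectic form; the maximal commuting classes are the lines
  \<open>{x, y, x + y}\<close> of the generalised quadrangle \<open>W(2)\<close>, so a non-identity operator outside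
  a class commutes with exactly one of its members. If \<open>{C\<^sub>1, C\<^sub>2, C\<^sub>3}\<close> is unextendible and
  \<open>p \<in> C\<^sub>1\<close>, \<open>q \<in> C\<^sub>2\<close> commute, then \<open>p + q \<in> C\<^sub>3\<close>: otherwise \<open>r = p + q\<close> avoids the union
  and commutes with a unique \<open>c \<in> C\<^sub>3\<close>, so that \<open>p\<close>, \<open>q\<close>, \<open>c\<close> are the only members of the
  union commuting with \<open>r\<close>, and the class \<open>{r, p + c, q + c}\<close> avoids the union as well. So the classes joining each \<open>p \<in> C\<^sub>1\<close> to the member of \<open>C\<^sub>2\<close> commuting with it are
  three disjoint classes meeting every \<open>C\<^sub>i\<close> once.
\<close>

instantiation pauli :: ab_group_add
begin

fun plus_pauli :: "pauli \<Rightarrow> pauli \<Rightarrow> pauli" where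
  "plus_pauli PI q = q"
| "plus_pauli p PI = p"
| "plus_pauli PX PY = PZ"
| "plus_pauli PY PX = PZ"
| "plus_pauli PX PZ = PY"
| "plus_pauli PZ PX = PY"
| "plus_pauli PY PZ = PX"
| "plus_pauli PZ PY = PX"
| "plus_pauli _ _ = PI"

definition zero_pauli :: pauli where
  "zero_pauli = PI"

definition uminus_pauli :: "pauli \<Rightarrow> pauli" where
  "uminus_pauli p = p"

definition minus_pauli :: "pauli \<Rightarrow> pauli \<Rightarrow> pauli" where
  "minus_pauli p q = p + q"

instance
proof
  fix a b c :: pauli
  show "a + b + c = a + (b + c)" by (cases a; cases b; cases c) auto
  show "a + b = b + a" by (cases a; cases b) auto
  show "0 + a = a" by (simp add: zero_pauli_def)
  show "- a + a = 0" by (cases a) (auto simp: uminus_pauli_def zero_pauli_def)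
  show "a - b = a + - b" by (simp add: minus_pauli_def uminus_pauli_def)
qed

end

lemma pauli_add_self [simp]: "(p :: pauli) + p = 0"
  by (cases p) (simp_all add: zero_pauli_def)

lemma pauli2_add_self [simp]: "(x :: pauli2) + x = 0"
  by (cases x) (simp add: zero_prod_def)

lemma pauli2_add_cancel_left [simp]: "(x :: pauli2) + (x + y) = y"
  by (simp flip: add.assoc)

lemma pauli2_add_eq_iff: "(x :: pauli2) + y = z \<longleftrightarrow> y = x + z"
  by auto

lemma identity2_eq_zero: "identity2 = 0"
  by (simp add: identity2_def zero_prod_def zero_pauli_def)

lemma anticommute1_add_right:
  "anticommute1 p (q + r) \<longleftrightarrow> anticommute1 p q \<noteq> anticommute1 p r"
  by (cases p; cases q; cases r) (simp_all add: anticommute1_def zero_pauli_def)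

lemma commute2_add_right: "commute2 x (y + z) \<longleftrightarrow> (commute2 x y \<longleftrightarrow> commute2 x z)"
  by (auto simp: commute2_def anticommute1_add_right)

lemma commute2_sym: "commute2 x y \<longleftrightarrow> commute2 y x"
  by (auto simp: commute2_def anticommute1_def)

lemma commute2_refl [simp]: "commute2 x x"
  by (simp add: commute2_def anticommute1_def)

definition paulis :: "pauli list" where
  "paulis = [PI, PX, PY, PZ]"

lemma set_product_paulis: "set (List.product paulis paulis) = UNIV"
proof -
  have "set paulis = UNIV"
    using pauli.exhaust by (auto simp: paulis_def)
  then show ?thesis by simp
qed

lemma commute2_in_span_check:
  "list_all (\<lambda>x. list_all (\<lambda>y. list_all (\<lambda>z.
     x \<noteq> 0 \<and> y \<noteq> 0 \<and> x \<noteq> y \<and> commute2 x y \<and> commute2 x z \<and> commute2 y z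
       \<longrightarrow> z \<in> {0, x, y, x + y})
   (List.product paulis paulis)) (List.product paulis paulis)) (List.product paulis paulis)"
  unfolding paulis_def commute2_def anticommute1_def by code_simp

text \<open>A two-dimensional isotropic subspace of \<open>\<bbbF>\<^sub>2\<^sup>4\<close> is its own symplectic complement.\<close>

lemma commute2_in_span:
  assumes "x \<noteq> 0" "y \<noteq> 0" "x \<noteq> y" "commute2 x y" "commute2 x z" "commute2 y z"
  shows "z \<in> {0, x, y, x + y}"
  using commute2_in_span_check assms unfolding list_all_iff set_product_paulis by blast

lemma max_comm_class_finite: "max_comm_class C \<Longrightarrow> finite C"
  by (metis card.infinite max_comm_class_def zero_neq_numeral)

lemma max_comm_class_nonzero: "max_comm_class C \<Longrightarrow> x \<in> C \<Longrightarrow> x \<noteq> 0"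
  by (auto simp: max_comm_class_def identity2_eq_zero)

lemma max_comm_class_commute: "max_comm_class C \<Longrightarrow> x \<in> C \<Longrightarrow> y \<in> C \<Longrightarrow> commute2 x y"
  by (simp add: max_comm_class_def)

lemma max_comm_class_line:
  assumes "x \<noteq> 0" "y \<noteq> 0" "x \<noteq> y" "commute2 x y"
  shows "max_comm_class {x, y, x + y}"
proof -
  have "x + y \<noteq> x" "x + y \<noteq> y" "x + y \<noteq> 0"
    using assms by (auto simp: pauli2_add_eq_iff)
  with assms show ?thesis
    by (auto simp: max_comm_class_def identity2_eq_zero commute2_add_right commute2_sym)
qed

lemma max_comm_class_eq_line:
  assumes C: "max_comm_class C" and "x \<in> C" "y \<in> C" "x \<noteq> y"
  shows "C = {x, y, x + y}"
proof -
  have "card C = 3" "finite C"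
    using C max_comm_class_finite by (auto simp: max_comm_class_def)
  have "\<not> C \<subseteq> {x, y}"
    using card_mono[of "{x, y}" C] \<open>card C = 3\<close> by (auto simp: card_insert_if split: if_splits)
  then obtain z where z: "z \<in> C" "z \<noteq> x" "z \<noteq> y"
    by blast
  have "x \<noteq> 0" "y \<noteq> 0"
    using assms max_comm_class_nonzero by blast+
  with assms z have "z \<in> {0, x, y, x + y}"
    by (intro commute2_in_span) (auto intro: max_comm_class_commute)
  with z C have "z = x + y"
    using max_comm_class_nonzero by blast
  then have "{x, y, x + y} \<subseteq> C" "card {x, y, x + y} = 3"
    using assms z by auto
  with \<open>card C = 3\<close> \<open>finite C\<close> show ?thesis
    by (metis card_subset_eq)
qed

lemma max_comm_class_add_mem:
  "max_comm_class C \<Longrightarrow> x \<in> C \<Longrightarrow> y \<in> C \<Longrightarrow> x \<noteq> y \<Longrightarrow> x + y \<in> C"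
  by (drule max_comm_class_eq_line) auto

lemma max_comm_class_add_notin:
  assumes "max_comm_class C" "x \<in> C" "y \<notin> C" "y \<noteq> 0"
  shows "x + y \<notin> C"
proof
  assume "x + y \<in> C"
  moreover have "x \<noteq> x + y"
    using \<open>y \<noteq> 0\<close> by (metis add_cancel_left_right)
  ultimately have "x + (x + y) \<in> C"
    using assms by (rule_tac max_comm_class_add_mem) auto
  with assms show False
    by simp
qed

lemma max_comm_class_obtain_commuting:
  assumes C: "max_comm_class C"
  obtains c where "c \<in> C" "commute2 x c"
proof -
  have "card C = 3"
    using C by (simp add: max_comm_class_def)
  then obtain a b where ab: "a \<in> C" "b \<in> C" "a \<noteq> b"
    by (metis card_3_iff insertI1 insertI2)
  then have "C = {a, b, a + b}"
    by (intro max_comm_class_eq_line[OF C])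
  moreover have "commute2 x a \<or> commute2 x b \<or> commute2 x (a + b)"
    by (auto simp: commute2_add_right)
  ultimately show thesis
    using that ab by blast
qed

lemma max_comm_class_commuting_unique:
  assumes C: "max_comm_class C" and x: "x \<noteq> 0" "x \<notin> C"
    and c: "c \<in> C" "commute2 x c" and d: "d \<in> C" "commute2 x d"
  shows "c = d"
proof (rule ccontr)
  assume "c \<noteq> d"
  have "c \<noteq> 0" "d \<noteq> 0"
    using C c d max_comm_class_nonzero by blast+
  with C c d \<open>c \<noteq> d\<close> have "x \<in> {0, c, d, c + d}"
    by (intro commute2_in_span) (auto intro: max_comm_class_commute simp: commute2_sym)
  moreover have "C = {c, d, c + d}"
    using C c d \<open>c \<noteq> d\<close> by (intro max_comm_class_eq_line)
  ultimately show False
    using x by auto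
qed

lemma max_comm_classes_disjoint:
  assumes C: "max_comm_class C" and D: "max_comm_class D" and D': "max_comm_class D'"
    and p: "D \<inter> C = {p}" and p': "D' \<inter> C = {p'}" and "p \<noteq> p'"
  shows "D \<inter> D' = {}"
proof (rule ccontr)
  assume "D \<inter> D' \<noteq> {}"
  then obtain t where t: "t \<in> D" "t \<in> D'"
    by blast
  have "p \<in> D" "p \<in> C" "p' \<in> D'" "p' \<in> C"
    using p p' by blast+
  have "t \<notin> C"
  proof
    assume "t \<in> C"
    then have "t \<in> D \<inter> C" "t \<in> D' \<inter> C"
      using t by blast+
    with p p' \<open>p \<noteq> p'\<close> show False
      by simp
  qed
  moreover have "commute2 t p" "commute2 t p'" "t \<noteq> 0"
    using max_comm_class_commute[OF D t(1) \<open>p \<in> D\<close>]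
      max_comm_class_commute[OF D' t(2) \<open>p' \<in> D'\<close>] max_comm_class_nonzero[OF D t(1)]
    by simp_all
  ultimately have "p = p'"
    using max_comm_class_commuting_unique[OF C] \<open>p \<in> C\<close> \<open>p' \<in> C\<close> by blast
  with \<open>p \<noteq> p'\<close> show False ..
qed

lemma card_Un3_disjoint:
  "finite A \<Longrightarrow> finite B \<Longrightarrow> finite C \<Longrightarrow> A \<inter> B = {} \<Longrightarrow> A \<inter> C = {} \<Longrightarrow> B \<inter> C = {}
    \<Longrightarrow> card (A \<union> B \<union> C) = card A + card B + card C"
  by (simp add: card_Un_disjoint Int_Un_distrib2)

lemma max_comm_classes_Un3_eq:
  assumes "max_comm_class A1" "max_comm_class A2" "max_comm_class A3"
    "A1 \<inter> A2 = {}" "A1 \<inter> A3 = {}" "A2 \<inter> A3 = {}"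
    and "max_comm_class B1" "max_comm_class B2" "max_comm_class B3"
    "B1 \<inter> B2 = {}" "B1 \<inter> B3 = {}" "B2 \<inter> B3 = {}"
    and "A1 \<union> A2 \<union> A3 \<subseteq> B1 \<union> B2 \<union> B3"
  shows "A1 \<union> A2 \<union> A3 = B1 \<union> B2 \<union> B3"
proof (rule card_subset_eq)
  show "finite (B1 \<union> B2 \<union> B3)"
    using assms max_comm_class_finite by blast
  show "card (A1 \<union> A2 \<union> A3) = card (B1 \<union> B2 \<union> B3)"
    using assms by (simp add: card_Un3_disjoint max_comm_class_finite)
      (simp add: max_comm_class_def)
qed (use assms in simp)

locale unextendible_triple =
  fixes C1 C2 C3 :: "pauli2 set"
  assumes max1: "max_comm_class C1" and max2: "max_comm_class C2" and max3: "max_comm_class C3"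
    and disj12: "C1 \<inter> C2 = {}" and disj13: "C1 \<inter> C3 = {}" and disj23: "C2 \<inter> C3 = {}"
    and unext: "unextendible {C1, C2, C3}"
begin

lemma max_comm_class_meets_union:
  assumes D: "max_comm_class D"
  shows "D \<inter> (C1 \<union> C2 \<union> C3) \<noteq> {}"
proof
  assume "D \<inter> (C1 \<union> C2 \<union> C3) = {}"
  moreover have "identity2 \<notin> D"
    using D by (simp add: max_comm_class_def)
  ultimately have "D \<subseteq> UNIV - {identity2} - \<Union>{C1, C2, C3}"
    by blast
  with D unext show False
    unfolding unextendible_def by blast
qed

lemma commuting_mem_unique:
  assumes r: "r \<noteq> 0" "r \<notin> C1 \<union> C2 \<union> C3"
    and pqc: "p \<in> C1" "commute2 r p" "q \<in> C2" "commute2 r q" "c \<in> C3" "commute2 r c"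
    and u: "u \<in> C1 \<union> C2 \<union> C3" "commute2 r u"
  shows "u \<in> {p, q, c}"
proof -
  have "r \<notin> C1" "r \<notin> C2" "r \<notin> C3"
    using r by simp_all
  consider "u \<in> C1" | "u \<in> C2" | "u \<in> C3"
    using u by blast
  then show ?thesis
  proof cases
    case 1
    have "p = u"
      by (rule max_comm_class_commuting_unique[OF max1 r(1) \<open>r \<notin> C1\<close> pqc(1,2) 1 u(2)])
    then show ?thesis by simp
  next
    case 2
    have "q = u"
      by (rule max_comm_class_commuting_unique[OF max2 r(1) \<open>r \<notin> C2\<close> pqc(3,4) 2 u(2)])
    then show ?thesis by simp
  next
    case 3
    have "c = u"
      by (rule max_comm_class_commuting_unique[OF max3 r(1) \<open>r \<notin> C3\<close> pqc(5,6) 3 u(2)])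
    then show ?thesis by simp
  qed
qed

lemma commuting_sum_in_union:
  assumes p: "p \<in> C1" and q: "q \<in> C2" and pq: "commute2 p q"
  shows "p + q \<in> C1 \<union> C2 \<union> C3"
proof (rule ccontr)
  define r where "r = p + q"
  assume "p + q \<notin> C1 \<union> C2 \<union> C3"
  then have r: "r \<notin> C1 \<union> C2 \<union> C3"
    by (simp add: r_def)
  have "p \<noteq> 0" "q \<noteq> 0" "p \<noteq> q"
    using p q max1 max2 disj12 max_comm_class_nonzero by blast+
  then have "r \<noteq> 0"
    by (auto simp: r_def pauli2_add_eq_iff)
  have "commute2 r p" "commute2 r q"
    using pq by (auto simp: r_def commute2_sym commute2_add_right)
  obtain c where c: "c \<in> C3" "commute2 r c"
    using max_comm_class_obtain_commuting[OF max3] by blast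
  have "c \<noteq> 0" "c \<noteq> p" "c \<noteq> q" "c \<noteq> r"
    using c p q r disj13 disj23 max3 max_comm_class_nonzero by blast+
  have only_pqc: "u \<in> {p, q, c}" if "u \<in> C1 \<union> C2 \<union> C3" "commute2 r u" for u
    using commuting_mem_unique[OF \<open>r \<noteq> 0\<close> r p \<open>commute2 r p\<close> q \<open>commute2 r q\<close> c that] .
  define s where "s = p + c"
  have "r + s = q + c"
    by (simp add: r_def s_def add.commute add.left_commute)
  have "commute2 r s" "commute2 r (r + s)"
    using \<open>commute2 r p\<close> \<open>commute2 r q\<close> c
    by (simp_all add: \<open>r + s = q + c\<close> s_def commute2_add_right)
  have "s \<notin> C1 \<union> C2 \<union> C3"
  proof
    assume "s \<in> C1 \<union> C2 \<union> C3"
    then have "s \<in> {p, q, c}"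
      using only_pqc \<open>commute2 r s\<close> by blast
    with \<open>c \<noteq> 0\<close> \<open>c \<noteq> r\<close> \<open>p \<noteq> 0\<close> show False
      by (auto simp: s_def r_def pauli2_add_eq_iff)
  qed
  moreover have "r + s \<notin> C1 \<union> C2 \<union> C3"
  proof
    assume "r + s \<in> C1 \<union> C2 \<union> C3"
    then have "r + s \<in> {p, q, c}"
      using only_pqc \<open>commute2 r (r + s)\<close> by blast
    with \<open>c \<noteq> 0\<close> \<open>c \<noteq> r\<close> \<open>q \<noteq> 0\<close> show False
      unfolding \<open>r + s = q + c\<close> by (auto simp: r_def pauli2_add_eq_iff add.commute)
  qed
  moreover have "max_comm_class {r, s, r + s}"
    using \<open>r \<noteq> 0\<close> \<open>c \<noteq> p\<close> \<open>c \<noteq> q\<close> \<open>commute2 r s\<close>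
    by (intro max_comm_class_line) (auto simp: r_def s_def pauli2_add_eq_iff)
  ultimately show False
    using max_comm_class_meets_union r by blast
qed

lemma commuting_sum_mem:
  assumes p: "p \<in> C1" and q: "q \<in> C2" and pq: "commute2 p q"
  shows "p + q \<in> C3"
proof -
  have "p \<noteq> 0" "q \<noteq> 0" "q \<notin> C1" "p \<notin> C2"
    using p q max1 max2 disj12 max_comm_class_nonzero by blast+
  then have "p + q \<notin> C1" "p + q \<notin> C2"
    using max_comm_class_add_notin[OF max1 p _ \<open>q \<noteq> 0\<close>]
      max_comm_class_add_notin[OF max2 q _ \<open>p \<noteq> 0\<close>] by (simp_all add: add.commute)
  with commuting_sum_in_union[OF p q pq] show ?thesis
    by blast
qed

definition transversal :: "pauli2 set \<Rightarrow> bool" where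
  "transversal D \<longleftrightarrow> max_comm_class D \<and> D \<subseteq> C1 \<union> C2 \<union> C3 \<and>
     (\<forall>C\<in>{C1, C2, C3}. card (D \<inter> C) = 1)"

lemma transversal_through:
  assumes p: "p \<in> C1"
  obtains D where "transversal D" "D \<inter> C1 = {p}"
proof -
  obtain q where q: "q \<in> C2" "commute2 p q"
    using max_comm_class_obtain_commuting[OF max2] by blast
  have pq: "p + q \<in> C3"
    using p q by (rule commuting_sum_mem)
  have "p \<noteq> 0" "q \<noteq> 0" "p \<noteq> q"
    using p q max1 max2 disj12 max_comm_class_nonzero by blast+
  define D where "D = {p, q, p + q}"
  have "max_comm_class D"
    using q \<open>p \<noteq> 0\<close> \<open>q \<noteq> 0\<close> \<open>p \<noteq> q\<close> by (simp add: D_def max_comm_class_line)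
  moreover have "D \<inter> C1 = {p}" "D \<inter> C2 = {q}" "D \<inter> C3 = {p + q}"
    using p q pq disj12 disj13 disj23 by (auto simp: D_def)
  moreover have "D \<subseteq> C1 \<union> C2 \<union> C3"
    using p q pq by (simp add: D_def)
  ultimately have "transversal D"
    by (simp add: transversal_def)
  with \<open>D \<inter> C1 = {p}\<close> show thesis
    using that by blast
qed

lemma transversal_notin_triple:
  assumes "transversal D"
  shows "D \<notin> {C1, C2, C3}"
proof -
  have "card (C1 \<inter> C1) = 3" "card (C2 \<inter> C1) = 0" "card (C3 \<inter> C1) = 0"
    using max1 disj12 disj13 by (auto simp: max_comm_class_def Int_commute)
  with assms show ?thesis
    by (auto simp: transversal_def)
qed

lemma transversals_Un_eq:
  assumes "transversal D1" "transversal D2" "transversal D3"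
    and "D1 \<inter> D2 = {}" "D1 \<inter> D3 = {}" "D2 \<inter> D3 = {}"
  shows "D1 \<union> D2 \<union> D3 = C1 \<union> C2 \<union> C3"
  using assms max1 max2 max3 disj12 disj13 disj23
  by (intro max_comm_classes_Un3_eq) (auto simp: transversal_def)

end

theorem theorem5:
  fixes C1 C2 C3 :: "pauli2 set"
  assumes "max_comm_class C1" and "max_comm_class C2" and "max_comm_class C3"
    and "C1 \<inter> C2 = {}" and "C1 \<inter> C3 = {}" and "C2 \<inter> C3 = {}"
    and "unextendible {C1, C2, C3}"
  shows "\<exists>D1 D2 D3. max_comm_class D1 \<and> max_comm_class D2 \<and> max_comm_class D3 \<and>
           D1 \<inter> D2 = {} \<and> D1 \<inter> D3 = {} \<and> D2 \<inter> D3 = {} \<and>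
           D1 \<union> D2 \<union> D3 = C1 \<union> C2 \<union> C3 \<and>
           {D1, D2, D3} \<noteq> {C1, C2, C3} \<and>
           (\<forall>D\<in>{D1, D2, D3}. \<forall>C\<in>{C1, C2, C3}. card (D \<inter> C) = 1)"
proof -
  interpret unextendible_triple C1 C2 C3
    using assms by unfold_locales
  obtain p1 p2 p3 where C1: "C1 = {p1, p2, p3}" and "p1 \<noteq> p2" "p1 \<noteq> p3" "p2 \<noteq> p3"
    using max1 unfolding max_comm_class_def card_3_iff by blast
  have "p1 \<in> C1" "p2 \<in> C1" "p3 \<in> C1"
    by (simp_all add: C1)
  obtain D1 where D1: "transversal D1" "D1 \<inter> C1 = {p1}"
    using transversal_through[OF \<open>p1 \<in> C1\<close>] .
  obtain D2 where D2: "transversal D2" "D2 \<inter> C1 = {p2}"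
    using transversal_through[OF \<open>p2 \<in> C1\<close>] .
  obtain D3 where D3: "transversal D3" "D3 \<inter> C1 = {p3}"
    using transversal_through[OF \<open>p3 \<in> C1\<close>] .
  have "D1 \<inter> D2 = {}" "D1 \<inter> D3 = {}" "D2 \<inter> D3 = {}"
    using max_comm_classes_disjoint[OF max1] D1 D2 D3 \<open>p1 \<noteq> p2\<close> \<open>p1 \<noteq> p3\<close> \<open>p2 \<noteq> p3\<close>
    by (simp_all add: transversal_def)
  moreover have "{D1, D2, D3} \<noteq> {C1, C2, C3}"
    using transversal_notin_triple[OF D1(1)] by auto
  ultimately show ?thesis
    using D1(1) D2(1) D3(1) transversals_Un_eq[OF D1(1) D2(1) D3(1)] unfolding transversal_def
    by (intro exI[of _ D1] exI[of _ D2] exI[of _ D3]) simp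
qed

end
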